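(* For every $x\in\Delta\setminus\partial\Delta$, $\nabla H\cdot F(x)=p(x)\ge0$, where $p(x)=\sum_{i,j,k\in\mathbb{V}:\,x_{ij},x_{ik}>0}\frac{x_{ij}x_{ik}}{x_i}(y_{ij}-y_{ik})^2$. In particular $H$ is a Lyapunov function on $\Delta\setminus\partial\Delta$ for the ODE $\dot x=F(x)$.
   Context: Let $G=(\mathbb{V},E)$ be a finite graph with adjacency $\sim$. Let $a_{ij}=a_{ji}\ge0$ ($>0$ only if $i\sim j$) and $p_{ij}=p_{ji}\in[0,1]$ ($=0$ if $i\not\sim j$), with some $a_{ij}p_{ij}>0$. Fix $h_1\in(0,1]$; $\Delta$ is the set of arrays $x=(x_{ij})_{i,j\in\mathbb{V}}$ with $x_{ij}=x_{ji}\ge0$, $x_{ij}=0$ if $i\not\sim j$, $\sum_{i,j}x_{ij}=1$, $\sum_{(i,j):a_{ij}p_{ij}>0}x_{ij}\ge h_1$; $x_i=\sum_jx_{ij}$. $\partial\Delta$: the $x\in\Delta$ such that some vertex $i$ having a neighbour $j$ with $a_{ij}p_{ij}>0$ has $\sum_{j:a_{ij}p_{ij}>0}x_{ij}=0$. $H(x)=\sum_{(i,j):x_{ij}>0}a_{ij}p_{ij}x_{ij}^2/(x_ix_j)$; $y_{ij}=a_{ij}p_{ij}x_{ij}/(x_ix_j)$ (weighted efficiency; $0$ if $a_{ij}p_{ij}=0$); $F(x)_{ij}=x_{ij}(y_{ij}-H(x))$ ($0$ if $x_{ij}=0$). Here $\nabla H=(\partial H/\partial x_{ij})_{i,j}$,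 where $H$ is regarded as a function of the variables $x_{ij}$ indexed by ordered pairs, $x_{ij}$ and $x_{ji}$ being treated as independent variables, with $x_i=\sum_jx_{ij}$; $\nabla H\cdot F=\sum_{i,j}\frac{\partial H}{\partial x_{ij}}F_{ij}$. *)

theory Defs
  imports "HOL-Analysis.Analysis"
begin

definition vtot :: "('v::finite \<Rightarrow> 'v \<Rightarrow> real) \<Rightarrow> 'v \<Rightarrow> real" where
  "vtot x i = (\<Sum>j\<in>UNIV. x i j)"

definition Hfun :: "('v::finite \<Rightarrow> 'v \<Rightarrow> real) \<Rightarrow> ('v \<Rightarrow> 'v \<Rightarrow> real) \<Rightarrow> ('v \<Rightarrow> 'v \<Rightarrow> real) \<Rightarrow> real" where
  "Hfun a p x = (\<Sum>(i,j)\<in>{(i,j). x i j > 0}. a i j * p i j * (x i j)^2 / (vtot x i * vtot x j))"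

definition yeff :: "('v::finite \<Rightarrow> 'v \<Rightarrow> real) \<Rightarrow> ('v \<Rightarrow> 'v \<Rightarrow> real) \<Rightarrow> ('v \<Rightarrow> 'v \<Rightarrow> real) \<Rightarrow> 'v \<Rightarrow> 'v \<Rightarrow> real" where
  "yeff a p x i j = (if a i j * p i j = 0 then 0 else a i j * p i j * x i j / (vtot x i * vtot x j))"

definition Ffield :: "('v::finite \<Rightarrow> 'v \<Rightarrow> real) \<Rightarrow> ('v \<Rightarrow> 'v \<Rightarrow> real) \<Rightarrow> ('v \<Rightarrow> 'v \<Rightarrow> real) \<Rightarrow> 'v \<Rightarrow> 'v \<Rightarrow> real" where
  "Ffield a p x i j = (if x i j = 0 then 0 else x i j * (yeff a p x i j - Hfun a p x))"

(* partial derivative of H w.r.t. the single variable x_ij (ordered pair; x_ji untouched) *)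
definition partialH :: "('v::finite \<Rightarrow> 'v \<Rightarrow> real) \<Rightarrow> ('v \<Rightarrow> 'v \<Rightarrow> real) \<Rightarrow> ('v \<Rightarrow> 'v \<Rightarrow> real) \<Rightarrow> 'v \<Rightarrow> 'v \<Rightarrow> real" where
  "partialH a p x i j = deriv (\<lambda>t. Hfun a p (x(i := (x i)(j := t)))) (x i j)"

definition gradH_dot_F :: "('v::finite \<Rightarrow> 'v \<Rightarrow> real) \<Rightarrow> ('v \<Rightarrow> 'v \<Rightarrow> real) \<Rightarrow> ('v \<Rightarrow> 'v \<Rightarrow> real) \<Rightarrow> real" where
  "gradH_dot_F a p x = (\<Sum>i\<in>UNIV. \<Sum>j\<in>UNIV. partialH a p x i j * Ffield a p x i j)"

definition pfun :: "('v::finite \<Rightarrow> 'v \<Rightarrow> real) \<Rightarrow> ('v \<Rightarrow> 'v \<Rightarrow> real) \<Rightarrow> ('v \<Rightarrow> 'v \<Rightarrow> real) \<Rightarrow> real" where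
  "pfun a p x = (\<Sum>(i,j,k)\<in>{(i,j,k). x i j > 0 \<and> x i k > 0}.
      x i j * x i k / vtot x i * (yeff a p x i j - yeff a p x i k)^2)"

definition inDelta :: "('v::finite \<Rightarrow> 'v \<Rightarrow> bool) \<Rightarrow> ('v \<Rightarrow> 'v \<Rightarrow> real) \<Rightarrow> ('v \<Rightarrow> 'v \<Rightarrow> real) \<Rightarrow> real \<Rightarrow> ('v \<Rightarrow> 'v \<Rightarrow> real) \<Rightarrow> bool" where
  "inDelta adj a p h1 x \<longleftrightarrow>
     (\<forall>i j. x i j = x j i) \<and> (\<forall>i j. x i j \<ge> 0) \<and> (\<forall>i j. \<not> adj i j \<longrightarrow> x i j = 0) \<and>
     (\<Sum>i\<in>UNIV. \<Sum>j\<in>UNIV. x i j) = 1 \<and>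
     (\<Sum>(i,j)\<in>{(i,j). a i j * p i j > 0}. x i j) \<ge> h1"

definition inBoundary :: "('v::finite \<Rightarrow> 'v \<Rightarrow> bool) \<Rightarrow> ('v \<Rightarrow> 'v \<Rightarrow> real) \<Rightarrow> ('v \<Rightarrow> 'v \<Rightarrow> real) \<Rightarrow> real \<Rightarrow> ('v \<Rightarrow> 'v \<Rightarrow> real) \<Rightarrow> bool" where
  "inBoundary adj a p h1 x \<longleftrightarrow> inDelta adj a p h1 x \<and>
     (\<exists>i. (\<exists>j. adj i j \<and> a i j * p i j > 0) \<and> (\<Sum>j\<in>{j. a i j * p i j > 0}. x i j) = 0)"

end

theory Submission imports Defs begin

text \<open>Moving the single variable \<open>x\<^sub>i\<^sub>j\<close> moves \<open>x\<^sub>i\<^sub>j\<close> and the total \<open>x\<^sub>i\<close>; by symmetry of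
  \<open>a\<close>, \<open>p\<close>, \<open>x\<close> this gives \<open>\<partial>H/\<partial>x\<^sub>i\<^sub>j = 2 (y\<^sub>i\<^sub>j - m\<^sub>i)\<close>, where \<open>m\<^sub>i\<close> is the mean of the
  \<open>y\<^sub>i\<^sub>j\<close> weighted by the \<open>x\<^sub>i\<^sub>j\<close>. Hence \<open>\<nabla>H \<cdot> F = 2 \<Sum>\<^sub>i \<Sum>\<^sub>j x\<^sub>i\<^sub>j (y\<^sub>i\<^sub>j - m\<^sub>i) (y\<^sub>i\<^sub>j - H)\<close>, and as the
  weighted deviations \<open>y\<^sub>i\<^sub>j - m\<^sub>i\<close> sum to zero, each inner sum is the weighted variance of the
  \<open>y\<^sub>i\<^sub>j\<close>, which is the pairwise sum \<open>p(x)\<close>.\<close>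

lemma sum_Collect_finite:
  "(\<Sum>z\<in>{z::'a::finite. P z}. f z :: 'b::comm_monoid_add) = (\<Sum>z\<in>UNIV. if P z then f z else 0)"
  using sum.inter_filter[of UNIV f P] by simp

lemma sum_Collect_pair:
  fixes f :: "'a::finite \<Rightarrow> 'b::finite \<Rightarrow> 'c::comm_monoid_add"
  shows "(\<Sum>(k,l)\<in>{(k,l). P k l}. f k l) = (\<Sum>k\<in>UNIV. \<Sum>l\<in>UNIV. if P k l then f k l else 0)"
  by (simp add: sum_Collect_finite sum.cartesian_product case_prod_beta flip: UNIV_Times_UNIV)

lemma sum_Collect_triple:
  fixes f :: "'a::finite \<Rightarrow> 'b::finite \<Rightarrow> 'c::finite \<Rightarrow> 'd::comm_monoid_add"
  shows "(\<Sum>(i,j,k)\<in>{(i,j,k). P i j k}. f i j k) =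
    (\<Sum>i\<in>UNIV. \<Sum>j\<in>UNIV. \<Sum>k\<in>UNIV. if P i j k then f i j k else 0)"
  by (simp add: sum_Collect_finite sum.cartesian_product case_prod_beta flip: UNIV_Times_UNIV)

lemma sum_sum_weighted_sq_diff:
  fixes w e :: "'a \<Rightarrow> real"
  assumes "finite A"
  shows "(\<Sum>j\<in>A. \<Sum>k\<in>A. w j * w k * (e j - e k)^2) =
    2 * (\<Sum>j\<in>A. w j) * (\<Sum>j\<in>A. w j * (e j)^2) - 2 * (\<Sum>j\<in>A. w j * e j)^2"
proof -
  have "(\<Sum>j\<in>A. \<Sum>k\<in>A. w j * w k * (e j - e k)^2) =
      (\<Sum>j\<in>A. \<Sum>k\<in>A. w k * (w j * (e j)^2)) + (\<Sum>j\<in>A. \<Sum>k\<in>A. w j * (w k * (e k)^2))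
      - 2 * (\<Sum>j\<in>A. \<Sum>k\<in>A. (w j * e j) * (w k * e k))"
    by (simp add: sum.distrib sum_subtractf sum_distrib_left power2_eq_square algebra_simps)
  also have "\<dots> = 2 * (\<Sum>j\<in>A. w j) * (\<Sum>j\<in>A. w j * (e j)^2) - 2 * (\<Sum>j\<in>A. w j * e j)^2"
    by (simp add: sum_product[symmetric] sum.swap[where A = A] power2_eq_square)
  finally show ?thesis .
qed

lemma sum_centered_mult_eq_sum_sq_diff:
  fixes w y :: "'a \<Rightarrow> real"
  assumes "finite A" and W: "(\<Sum>j\<in>A. w j) \<noteq> 0"
    and m: "m = (\<Sum>j\<in>A. w j * y j) / (\<Sum>j\<in>A. w j)"
  shows "(\<Sum>j\<in>A. w j * (y j - m) * (y j - c)) =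
    (\<Sum>j\<in>A. \<Sum>k\<in>A. w j * w k * (y j - y k)^2) / (2 * (\<Sum>j\<in>A. w j))"
proof -
  define e where "e j = y j - m" for j
  have centered: "(\<Sum>j\<in>A. w j * e j) = 0"
  proof -
    have "(\<Sum>j\<in>A. w j * e j) = (\<Sum>j\<in>A. w j * y j) - (\<Sum>j\<in>A. w j) * m"
      by (simp add: e_def right_diff_distrib sum_subtractf sum_distrib_right)
    then show ?thesis
      using W by (simp add: m)
  qed
  have "(\<Sum>j\<in>A. w j * (y j - m) * (y j - c)) = (\<Sum>j\<in>A. w j * (e j)^2 + (m - c) * (w j * e j))"
    by (intro sum.cong refl) (simp add: e_def power2_eq_square algebra_simps)
  also have "\<dots> = (\<Sum>j\<in>A. w j * (e j)^2)"
    using centered by (simp add: sum.distrib sum_distrib_left[symmetric])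
  also have "\<dots> = (\<Sum>j\<in>A. \<Sum>k\<in>A. w j * w k * (e j - e k)^2) / (2 * (\<Sum>j\<in>A. w j))"
    using assms(1) W centered by (simp add: sum_sum_weighted_sq_diff)
  finally show ?thesis
    by (simp add: e_def)
qed

lemma has_field_derivative_sq_over_mult:
  fixes c u \<alpha> A B \<beta> \<gamma> t0 :: real
  assumes "A \<noteq> 0" "B \<noteq> 0"
  shows "((\<lambda>t. c * (u + \<alpha> * (t - t0))^2 / ((A + \<beta> * (t - t0)) * (B + \<gamma> * (t - t0))))
    has_field_derivative c * (2 * u * \<alpha> * A * B - u^2 * (\<beta> * B + A * \<gamma>)) / (A * B)^2) (at t0)"
  using assms by (auto intro!: derivative_eq_intros simp: field_simps power2_eq_square)

lemma vtot_update:
  "vtot (x(i := (x i)(j := t))) k = vtot x k + of_bool (k = i) * (t - x i j)"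
proof -
  have "vtot (x(i := (x i)(j := t))) k = (\<Sum>l\<in>UNIV. x k l + of_bool (k = i \<and> l = j) * (t - x i j))"
    unfolding vtot_def by (intro sum.cong refl) auto
  then show ?thesis
    by (simp add: sum.distrib vtot_def)
qed

lemma le_vtot:
  assumes "\<And>l. x k l \<ge> 0"
  shows "x k l \<le> vtot x k"
  unfolding vtot_def using assms by (intro member_le_sum) auto

lemma vtot_pos:
  assumes "\<And>k l. x k l \<ge> 0" "\<And>k l. x k l = x l k" "x k l > 0"
  shows "vtot x k > 0" "vtot x l > 0"
  using assms le_vtot[of x k l] le_vtot[of x l k] by fastforce+

lemma Hfun_update:
  assumes "x i j > 0" "t > 0"
  shows "Hfun a p (x(i := (x i)(j := t))) =
    (\<Sum>(k,l)\<in>{(k,l). x k l > 0}. a k l * p k l * (x k l + of_bool (k = i \<and> l = j) * (t - x i j))^2 /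
      ((vtot x k + of_bool (k = i) * (t - x i j)) * (vtot x l + of_bool (l = i) * (t - x i j))))"
proof -
  have "{(k,l). (x(i := (x i)(j := t))) k l > 0} = {(k,l). x k l > 0}"
    using assms by (auto split: if_splits)
  then show ?thesis
    unfolding Hfun_def vtot_update by (intro sum.cong) auto
qed

lemma has_field_derivative_Hfun_update:
  assumes x_nonneg: "\<And>k l. x k l \<ge> 0" and x_sym: "\<And>k l. x k l = x l k" and "x i j > 0"
  shows "((\<lambda>t. Hfun a p (x(i := (x i)(j := t)))) has_field_derivative
    (\<Sum>(k,l)\<in>{(k,l). x k l > 0}. a k l * p k l *
      (2 * x k l * of_bool (k = i \<and> l = j) * vtot x k * vtot x l
        - (x k l)^2 * (of_bool (k = i) * vtot x l + vtot x k * of_bool (l = i))) / (vtot x k * vtot x l)^2))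
    (at (x i j))"
  (is "(_ has_field_derivative ?D) _")
proof -
  have vtot_nonzero: "vtot x k \<noteq> 0" "vtot x l \<noteq> 0" if "x k l > 0" for k l
    using vtot_pos[of x, OF x_nonneg x_sym that] by simp_all
  have "((\<lambda>t. \<Sum>(k,l)\<in>{(k,l). x k l > 0}. a k l * p k l * (x k l + of_bool (k = i \<and> l = j) * (t - x i j))^2 /
      ((vtot x k + of_bool (k = i) * (t - x i j)) * (vtot x l + of_bool (l = i) * (t - x i j))))
    has_field_derivative ?D) (at (x i j))"
    by (intro DERIV_sum) (auto intro!: has_field_derivative_sq_over_mult dest: vtot_nonzero)
  then show ?thesis
    by (rule has_field_derivative_transform_within_open[where S = "{0<..}"])
      (use assms(3) Hfun_update[symmetric] in auto)
qed

definition ymean :: "('v::finite \<Rightarrow> 'v \<Rightarrow> real) \<Rightarrow> ('v \<Rightarrow> 'v \<Rightarrow> real) \<Rightarrow> ('v \<Rightarrow> 'v \<Rightarrow> real) \<Rightarrow> 'v \<Rightarrow> real" where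
  "ymean a p x i = (\<Sum>l\<in>UNIV. x i l * yeff a p x i l) / vtot x i"

lemma partialH_eq:
  assumes a_sym: "\<And>k l. a k l = a l k" and p_sym: "\<And>k l. p k l = p l k"
    and x_nonneg: "\<And>k l. x k l \<ge> 0" and x_sym: "\<And>k l. x k l = x l k" and "x i j > 0"
  shows "partialH a p x i j = 2 * (yeff a p x i j - ymean a p x i)"
proof -
  let ?X = "vtot x" and ?y = "yeff a p x"
  have "partialH a p x i j =
    (\<Sum>(k,l)\<in>{(k,l). x k l > 0}. a k l * p k l *
      (2 * x k l * of_bool (k = i \<and> l = j) * ?X k * ?X l
        - (x k l)^2 * (of_bool (k = i) * ?X l + ?X k * of_bool (l = i))) / (?X k * ?X l)^2)"
    unfolding partialH_def by (intro DERIV_imp_deriv has_field_derivative_Hfun_update assms)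
  also have "\<dots> = (\<Sum>k\<in>UNIV. \<Sum>l\<in>UNIV. (if k = i \<and> l = j then 2 * ?y i j else 0)
      - (if k = i then x i l * ?y i l / ?X i else 0) - (if l = i then x i k * ?y i k / ?X i else 0))"
    unfolding sum_Collect_pair
  proof (intro sum.cong refl)
    fix k l
    show "(if x k l > 0 then a k l * p k l *
        (2 * x k l * of_bool (k = i \<and> l = j) * ?X k * ?X l
          - (x k l)^2 * (of_bool (k = i) * ?X l + ?X k * of_bool (l = i))) / (?X k * ?X l)^2 else 0)
      = (if k = i \<and> l = j then 2 * ?y i j else 0)
        - (if k = i then x i l * ?y i l / ?X i else 0) - (if l = i then x i k * ?y i k / ?X i else 0)"
    proof (cases "x k l > 0")
      case False
      then have "x k l = 0" "x l k = 0"
        using x_nonneg[of k l] x_sym[of k l] by auto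
      then show ?thesis
        using False assms(5) by (auto simp: yeff_def)
    next
      case True
      \<comment> \<open>the change of \<open>x\<^sub>l\<close> at \<open>l = i\<close> yields the row-\<open>i\<close> term \<open>x\<^sub>i\<^sub>k y\<^sub>i\<^sub>k / x\<^sub>i\<close> only
        after transposing \<open>(k, i)\<close>, which is where the symmetry of \<open>a\<close>, \<open>p\<close>, \<open>x\<close> enters\<close>
      then show ?thesis
        using vtot_pos[of x, OF x_nonneg x_sym True]
          x_sym[of k l] a_sym[of k l] p_sym[of k l]
        by (cases "k = i"; cases "l = i"; cases "l = j")
          (simp_all add: yeff_def field_simps power2_eq_square)
    qed
  qed
  also have "\<dots> = 2 * (?y i j - ymean a p x i)"
  proof -
    have "(\<Sum>l\<in>UNIV. if k = i \<and> l = j then 2 * ?y i j else 0) = (if k = i then 2 * ?y i j else 0)"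
      "(\<Sum>l\<in>UNIV. if k = i then x i l * ?y i l / ?X i else 0) =
        (if k = i then (\<Sum>l\<in>UNIV. x i l * ?y i l / ?X i) else 0)" for k
      by auto
    then show ?thesis
      by (simp add: sum_subtractf ymean_def sum_divide_distrib)
  qed
  finally show ?thesis .
qed

lemma partialH_mult_Ffield:
  assumes "\<And>k l. a k l = a l k" "\<And>k l. p k l = p l k"
    and x_nonneg: "\<And>k l. x k l \<ge> 0" and "\<And>k l. x k l = x l k"
  shows "partialH a p x i j * Ffield a p x i j =
    2 * x i j * (yeff a p x i j - ymean a p x i) * (yeff a p x i j - Hfun a p x)"
proof (cases "x i j = 0")
  case False
  then have "x i j > 0"
    using x_nonneg[of i j] by simp
  then show ?thesis
    using False partialH_eq[of a p x i j, OF assms \<open>x i j > 0\<close>] by (simp add: Ffield_def)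
qed (simp add: Ffield_def)

lemma sum_centered_yeff:
  assumes x_nonneg: "\<And>k l. x k l \<ge> 0"
  shows "(\<Sum>j\<in>UNIV. x i j * (yeff a p x i j - ymean a p x i) * (yeff a p x i j - c)) =
    (\<Sum>j\<in>UNIV. \<Sum>k\<in>UNIV. x i j * x i k / vtot x i * (yeff a p x i j - yeff a p x i k)^2) / 2"
proof (cases "vtot x i = 0")
  case True
  then have "x i j = 0" for j
    using x_nonneg unfolding vtot_def by (simp add: sum_nonneg_eq_0_iff)
  then show ?thesis
    by simp
next
  case False
  have "(\<Sum>j\<in>UNIV. x i j * (yeff a p x i j - ymean a p x i) * (yeff a p x i j - c)) =
    (\<Sum>j\<in>UNIV. \<Sum>k\<in>UNIV. x i j * x i k * (yeff a p x i j - yeff a p x i k)^2) / (2 * vtot x i)"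
    unfolding vtot_def
    by (rule sum_centered_mult_eq_sum_sq_diff) (use False in \<open>simp_all add: ymean_def vtot_def\<close>)
  then show ?thesis
    by (simp add: sum_divide_distrib mult.commute)
qed

lemma pfun_eq_sum:
  assumes x_nonneg: "\<And>k l. x k l \<ge> 0"
  shows "pfun a p x = (\<Sum>i\<in>UNIV. \<Sum>j\<in>UNIV. \<Sum>k\<in>UNIV.
    x i j * x i k / vtot x i * (yeff a p x i j - yeff a p x i k)^2)"
  unfolding pfun_def sum_Collect_triple
proof (intro sum.cong refl)
  fix i j k
  show "(if x i j > 0 \<and> x i k > 0 then x i j * x i k / vtot x i * (yeff a p x i j - yeff a p x i k)^2 else 0) =
    x i j * x i k / vtot x i * (yeff a p x i j - yeff a p x i k)^2"
    using x_nonneg[of i j] x_nonneg[of i k] by auto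
qed

theorem proposition2:
  fixes adj :: "'v::finite \<Rightarrow> 'v \<Rightarrow> bool"
    and a p x :: "'v \<Rightarrow> 'v \<Rightarrow> real" and h1 :: real
  assumes adj_sym: "\<And>i j. adj i j \<longleftrightarrow> adj j i"
    and a_sym: "\<And>i j. a i j = a j i" and a_nonneg: "\<And>i j. a i j \<ge> 0"
    and a_adj: "\<And>i j. a i j > 0 \<Longrightarrow> adj i j"
    and p_sym: "\<And>i j. p i j = p j i" and p_range: "\<And>i j. 0 \<le> p i j \<and> p i j \<le> 1"
    and p_adj: "\<And>i j. \<not> adj i j \<Longrightarrow> p i j = 0"
    and ap_pos: "\<exists>i j. a i j * p i j > 0"
    and h1: "0 < h1" "h1 \<le> 1"
    and x_in: "inDelta adj a p h1 x" and x_notbd: "\<not> inBoundary adj a p h1 x"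
  shows "gradH_dot_F a p x = pfun a p x \<and> pfun a p x \<ge> 0"
proof
  from x_in have x_sym: "\<And>i j. x i j = x j i" and x_nonneg: "\<And>i j. x i j \<ge> 0"
    by (auto simp: inDelta_def)
  have "gradH_dot_F a p x = (\<Sum>i\<in>UNIV. 2 * (\<Sum>j\<in>UNIV.
      x i j * (yeff a p x i j - ymean a p x i) * (yeff a p x i j - Hfun a p x)))"
    unfolding gradH_dot_F_def partialH_mult_Ffield[OF a_sym p_sym x_nonneg x_sym]
    by (simp add: sum_distrib_left mult.assoc)
  also have "\<dots> = pfun a p x"
    by (simp add: sum_centered_yeff pfun_eq_sum x_nonneg)
  finally show "gradH_dot_F a p x = pfun a p x" .
  show "pfun a p x \<ge> 0"
    unfolding pfun_eq_sum[OF x_nonneg] vtot_def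
    by (intro sum_nonneg divide_nonneg_nonneg mult_nonneg_nonneg) (simp_all add: x_nonneg)
qed

end
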